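(* For all positive integers $s,k$ and all nonnegative integers $t$, $$\binom{s+k-1}{s}\sum_{j=0}^{t}\binom{j+s-1}{s-1}\binom{j+k-1}{k-1}=\binom{t+s}{s}\sum_{j=0}^{k-1}\binom{j+s-1}{s-1}\binom{t+j}{j}.$$ *)

theory Defs
  imports Main
begin

end

theory Submission
  imports Defs
begin

(* Write C(j+b,b) = \<Sum>i C(j,i) C(b,i) (Vandermonde) and absorb C(j+a,a) C(j,i) = C(a+i,i) C(j+a,a+i);
   summing over j by the hockey-stick identity and multiplying by C(a+b+1,a+1) gives
     \<Sum>i C(a+i,i) C(a+i+1,a+1) C(a+b+1,a+i+1) C(a+t+1,a+i+1),
   which is symmetric in b and t. *)

lemma choose_add_mult_choose:
  fixes n k i :: nat
  shows "((n + k) choose (k + i)) * ((k + i) choose k) = ((n + k) choose k) * (n choose i)"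
proof (cases "i \<le> n")
  case True
  then show ?thesis using choose_mult[of k "k + i" "n + k"] by simp
next
  case False
  then show ?thesis by (simp add: binomial_eq_0)
qed

lemma choose_add_eq_sum_choose_mult:
  fixes j b n :: nat
  assumes "b \<le> n"
  shows "((j + b) choose b) = (\<Sum>i\<le>n. (j choose i) * (b choose i))"
proof -
  have "((j + b) choose b) = (\<Sum>i\<le>b. (j choose i) * (b choose (b - i)))"
    using vandermonde[of j b b] by simp
  also have "\<dots> = (\<Sum>i\<le>b. (j choose i) * (b choose i))"
    by (rule sum.cong) (auto simp: binomial_symmetric[symmetric])
  also have "\<dots> = (\<Sum>i\<le>n. (j choose i) * (b choose i))"
    by (rule sum.mono_neutral_left) (use assms in auto)
  finally show ?thesis .
qed

lemma sum_choose_upper_shift: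
  fixes a i t :: nat
  shows "(\<Sum>j=0..t. ((j + a) choose (a + i))) = ((t + a + 1) choose (a + i + 1))"
  by (induction t) (auto simp: binomial_eq_0)

lemma sum_choose_mult_choose_expand:
  fixes a b t n :: nat
  assumes "b \<le> n"
  shows "(\<Sum>j=0..t. ((j + a) choose a) * ((j + b) choose b))
       = (\<Sum>i\<le>n. (b choose i) * ((a + i) choose i) * ((t + a + 1) choose (a + i + 1)))"
proof -
  have absorb: "((j + a) choose a) * (j choose i) = ((a + i) choose i) * ((j + a) choose (a + i))"
    for j i :: nat
    using choose_add_mult_choose[of j a i] by (simp add: binomial_symmetric[of a "a + i"] mult.commute)
  have "(\<Sum>j=0..t. ((j + a) choose a) * ((j + b) choose b))
      = (\<Sum>j=0..t. \<Sum>i\<le>n. (b choose i) * (((j + a) choose a) * (j choose i)))"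
    by (simp add: choose_add_eq_sum_choose_mult[OF assms] sum_distrib_left ac_simps)
  also have "\<dots> = (\<Sum>i\<le>n. \<Sum>j=0..t. (b choose i) * ((a + i) choose i) * ((j + a) choose (a + i)))"
    by (simp add: absorb mult.assoc sum.swap[of _ "{0..t}"])
  also have "\<dots> = (\<Sum>i\<le>n. (b choose i) * ((a + i) choose i) * ((t + a + 1) choose (a + i + 1)))"
    by (simp add: sum_distrib_left[symmetric] sum_choose_upper_shift)
  finally show ?thesis .
qed

lemma scaled_sum_choose_mult_choose_symmetric:
  fixes a b t n :: nat
  assumes "b \<le> n"
  shows "((a + b + 1) choose (a + 1)) * (\<Sum>j=0..t. ((j + a) choose a) * ((j + b) choose b))
       = (\<Sum>i\<le>n. ((a + i) choose i) * ((a + i + 1) choose (a + 1))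
                    * ((a + b + 1) choose (a + i + 1)) * ((a + t + 1) choose (a + i + 1)))"
proof -
  have absorb: "((a + b + 1) choose (a + 1)) * (b choose i)
              = ((a + b + 1) choose (a + i + 1)) * ((a + i + 1) choose (a + 1))" for i
    using choose_add_mult_choose[of b "a + 1" i] by (simp add: ac_simps)
  show ?thesis
    unfolding sum_choose_mult_choose_expand[OF assms] sum_distrib_left
  proof (rule sum.cong[OF refl])
    fix i
    have "((a + b + 1) choose (a + 1)) * ((b choose i) * ((a + i) choose i) * ((t + a + 1) choose (a + i + 1)))
        = ((a + b + 1) choose (a + 1)) * (b choose i) * ((a + i) choose i) * ((t + a + 1) choose (a + i + 1))"
      by (simp only: mult.assoc)
    also have "\<dots> = ((a + i) choose i) * ((a + i + 1) choose (a + 1))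
                    * ((a + b + 1) choose (a + i + 1)) * ((a + t + 1) choose (a + i + 1))"
      by (simp only: absorb) (simp add: ac_simps)
    finally show "((a + b + 1) choose (a + 1)) * ((b choose i) * ((a + i) choose i) * ((t + a + 1) choose (a + i + 1)))
        = ((a + i) choose i) * ((a + i + 1) choose (a + 1))
            * ((a + b + 1) choose (a + i + 1)) * ((a + t + 1) choose (a + i + 1))" .
  qed
qed

lemma scaled_sum_choose_mult_choose_swap:
  fixes a b t :: nat
  shows "((a + b + 1) choose (a + 1)) * (\<Sum>j=0..t. ((j + a) choose a) * ((j + b) choose b))
       = ((a + t + 1) choose (a + 1)) * (\<Sum>j=0..b. ((j + a) choose a) * ((j + t) choose t))"
proof -
  have "((a + b + 1) choose (a + 1)) * (\<Sum>j=0..t. ((j + a) choose a) * ((j + b) choose b))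
      = (\<Sum>i\<le>b + t. ((a + i) choose i) * ((a + i + 1) choose (a + 1))
                    * ((a + b + 1) choose (a + i + 1)) * ((a + t + 1) choose (a + i + 1)))"
    by (rule scaled_sum_choose_mult_choose_symmetric) simp
  also have "\<dots> = (\<Sum>i\<le>b + t. ((a + i) choose i) * ((a + i + 1) choose (a + 1))
                    * ((a + t + 1) choose (a + i + 1)) * ((a + b + 1) choose (a + i + 1)))"
    by (rule sum.cong) (simp_all only: mult_ac)
  also have "\<dots> = ((a + t + 1) choose (a + 1)) * (\<Sum>j=0..b. ((j + a) choose a) * ((j + t) choose t))"
    by (rule scaled_sum_choose_mult_choose_symmetric[symmetric]) simp
  finally show ?thesis .
qed

theorem mainTheorem10:
  fixes s k t :: nat
  assumes "s \<ge> 1" and "k \<ge> 1"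
  shows "((s + k - 1) choose s) * (\<Sum>j=0..t. ((j + s - 1) choose (s - 1)) * ((j + k - 1) choose (k - 1)))
       = ((t + s) choose s) * (\<Sum>j=0..k-1. ((j + s - 1) choose (s - 1)) * ((t + j) choose j))"
proof -
  obtain a b where s: "s = a + 1" and k: "k = b + 1"
    using assms by (metis le_add_diff_inverse2)
  have "((t + j) choose j) = ((j + t) choose t)" for j
    by (simp add: binomial_symmetric[of t "j + t"] add.commute)
  then show ?thesis
    using scaled_sum_choose_mult_choose_swap[of a b t] by (simp add: s k add.commute)
qed

end
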